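(* Let $G$ be a trigraph and $\Gamma\subseteq\operatorname{Aut}(G)$ a group of automorphisms. For every vertex $v\in V(G)$, $\deg_{G/\Gamma}(v^\Gamma)\leq\deg_G(v)$. In particular, $\Delta(G/\Gamma)\leq\Delta(G)$.
   Context: A trigraph is a finite simple graph whose edges are each colored red or black. $\operatorname{Aut}(G)$ is the automorphism group of the underlying simple graph of $G$ (automorphisms need not preserve edge colors). For $v\in V(G)$, $v^\Gamma$ is the orbit of $v$ under $\Gamma$. For a partition $\mathcal{P}$ of $V(G)$, the quotient trigraph $G/\mathcal{P}$ has vertex set $\mathcal{P}$; two distinct parts $U,W$ are joined by a black edge if every pair $\{u,w\}$ with $u\in U,w\in W$ is a black edge of $G$, are non-adjacent if no such pair is an edge, and are joined by a red edge otherwise. $G/\Gamma$ denotes $G/\mathcal{P}$ for $\mathcal{P}$ the partition of $V(G)$ into $\Gamma$-orbits. Degrees count edges of both colors; $\Delta$ denotes maximum degree. *)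

theory Defs
  imports Main "HOL-Algebra.Bij"
begin

type_synonym 'a trigraph = "'a set \<times> 'a set set \<times> 'a set set"

definition tverts :: "'a trigraph \<Rightarrow> 'a set" where
  "tverts G = fst G"

definition black :: "'a trigraph \<Rightarrow> 'a set set" where
  "black G = fst (snd G)"

definition red :: "'a trigraph \<Rightarrow> 'a set set" where
  "red G = snd (snd G)"

definition tedges :: "'a trigraph \<Rightarrow> 'a set set" where
  "tedges G = black G \<union> red G"

definition trigraph :: "'a trigraph \<Rightarrow> bool" where
  "trigraph G \<longleftrightarrow> finite (tverts G)
     \<and> (\<forall>e \<in> tedges G. \<exists>u v. u \<in> tverts G \<and> v \<in> tverts G \<and> u \<noteq> v \<and> e = {u, v})
     \<and> black G \<inter> red G = {}"

definition tdeg :: "'a trigraph \<Rightarrow> 'a \<Rightarrow> nat" where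
  "tdeg G v = card {w \<in> tverts G. {v, w} \<in> tedges G}"

text \<open>Maximum degree (0 for the empty trigraph).\<close>
definition maxdeg :: "'a trigraph \<Rightarrow> nat" where
  "maxdeg G = Sup (tdeg G ` tverts G)"

text \<open>Automorphisms of the underlying simple graph (colours ignored), as
  extensional bijections of the vertex set, so they live in the carrier of
  the symmetric group BijGroup (tverts G).\<close>
definition Aut :: "'a trigraph \<Rightarrow> ('a \<Rightarrow> 'a) set" where
  "Aut G = {f \<in> Bij (tverts G). \<forall>u \<in> tverts G. \<forall>w \<in> tverts G.
              {u, w} \<in> tedges G \<longleftrightarrow> {f u, f w} \<in> tedges G}"

definition orbit :: "('a \<Rightarrow> 'a) set \<Rightarrow> 'a \<Rightarrow> 'a set" where
  "orbit \<Gamma> v = {f v | f. f \<in> \<Gamma>}"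

definition quotient :: "'a trigraph \<Rightarrow> 'a set set \<Rightarrow> 'a set trigraph" where
  "quotient G P =
    (P,
     {{U, W} | U W. U \<in> P \<and> W \<in> P \<and> U \<noteq> W \<and>
        (\<forall>u \<in> U. \<forall>w \<in> W. {u, w} \<in> black G)},
     {{U, W} | U W. U \<in> P \<and> W \<in> P \<and> U \<noteq> W \<and>
        (\<exists>u \<in> U. \<exists>w \<in> W. {u, w} \<in> tedges G) \<and>
        \<not> (\<forall>u \<in> U. \<forall>w \<in> W. {u, w} \<in> black G)})"

definition orbit_quotient :: "'a trigraph \<Rightarrow> ('a \<Rightarrow> 'a) set \<Rightarrow> 'a set trigraph" where
  "orbit_quotient G \<Gamma> = quotient G (orbit \<Gamma> ` tverts G)"

end

theory Submission
  imports Defs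
begin

text \<open>Every edge of G/\<Gamma> between the orbits of v and x comes from an edge {u, w} of G
  with u in the orbit of v. Moving u back to v by an automorphism turns it into an edge
  {v, w'} of G with w' again in the orbit of x. So every neighbour of the orbit of v is
  the orbit of a neighbour of v, and the degree cannot increase.\<close>

definition tneighbours :: "'a trigraph \<Rightarrow> 'a \<Rightarrow> 'a set" where
  "tneighbours G v = {w \<in> tverts G. {v, w} \<in> tedges G}"

lemma tdeg_eq_card_tneighbours: "tdeg G v = card (tneighbours G v)"
  by (simp add: tdeg_def tneighbours_def)

lemma maxdeg_mono:
  assumes "finite (tverts G)"
    and "\<And>X. X \<in> tverts H \<Longrightarrow> \<exists>v \<in> tverts G. tdeg H X \<le> tdeg G v"
  shows "maxdeg H \<le> maxdeg G"
proof (cases "tverts H = {}")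
  case True
  then show ?thesis by (simp add: maxdeg_def)
next
  case False
  then show ?thesis
    unfolding maxdeg_def using assms by (intro cSup_mono) (auto intro: bdd_above_finite)
qed

context
  fixes \<Gamma> :: "('a \<Rightarrow> 'a) set" and S :: "'a set"
  assumes sg: "subgroup \<Gamma> (BijGroup S)"
begin

lemma subgroup_BijGroup_Bij: "g \<in> \<Gamma> \<Longrightarrow> g \<in> Bij S"
  using subgroup.subset[OF sg] by (auto simp: BijGroup_def)

lemma subgroup_BijGroup_apply_mem: "g \<in> \<Gamma> \<Longrightarrow> x \<in> S \<Longrightarrow> g x \<in> S"
  using subgroup_BijGroup_Bij by (auto simp: Bij_def bij_betw_def)

lemma subgroup_BijGroup_mult_apply:
  "f \<in> \<Gamma> \<Longrightarrow> g \<in> \<Gamma> \<Longrightarrow> x \<in> S \<Longrightarrow> (f \<otimes>\<^bsub>BijGroup S\<^esub> g) x = f (g x)"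
  using subgroup_BijGroup_Bij by (simp add: BijGroup_def compose_def)

lemma subgroup_BijGroup_inv_apply:
  assumes "g \<in> \<Gamma>" "x \<in> S"
  shows "(inv\<^bsub>BijGroup S\<^esub> g) (g x) = x"
proof -
  have "bij_betw g S S" using subgroup_BijGroup_Bij[OF assms(1)] by (simp add: Bij_def)
  then show ?thesis
    using assms subgroup_BijGroup_Bij subgroup_BijGroup_apply_mem
    by (simp add: inv_BijGroup bij_betw_def inv_into_f_f)
qed

lemma orbit_self: "x \<in> S \<Longrightarrow> x \<in> orbit \<Gamma> x"
  using subgroup.one_closed[OF sg] unfolding orbit_def
  by (intro CollectI exI[of _ "\<one>\<^bsub>BijGroup S\<^esub>"]) (simp add: BijGroup_def)

lemma orbit_apply_subset:
  assumes "g \<in> \<Gamma>" "x \<in> S"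
  shows "orbit \<Gamma> (g x) \<subseteq> orbit \<Gamma> x"
proof
  fix y assume "y \<in> orbit \<Gamma> (g x)"
  then obtain f where f: "f \<in> \<Gamma>" "y = f (g x)" unfolding orbit_def by blast
  then have "(f \<otimes>\<^bsub>BijGroup S\<^esub> g) x = y"
    using assms subgroup_BijGroup_mult_apply by simp
  with subgroup.m_closed[OF sg f(1) assms(1)] show "y \<in> orbit \<Gamma> x"
    unfolding orbit_def by blast
qed

lemma orbit_apply:
  assumes "g \<in> \<Gamma>" "x \<in> S"
  shows "orbit \<Gamma> (g x) = orbit \<Gamma> x"
proof
  show "orbit \<Gamma> (g x) \<subseteq> orbit \<Gamma> x" using orbit_apply_subset[OF assms] .
  have "orbit \<Gamma> ((inv\<^bsub>BijGroup S\<^esub> g) (g x)) \<subseteq> orbit \<Gamma> (g x)"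
    using assms subgroup.m_inv_closed[OF sg] subgroup_BijGroup_apply_mem
    by (intro orbit_apply_subset) auto
  then show "orbit \<Gamma> x \<subseteq> orbit \<Gamma> (g x)"
    using subgroup_BijGroup_inv_apply[OF assms] by simp
qed

end

text \<open>The parts must be nonempty: an empty part would be black-adjacent to every other part.\<close>

lemma tedges_quotient_witness:
  assumes "{U, W} \<in> tedges (quotient G P)" and "{} \<notin> P"
  shows "\<exists>u \<in> U. \<exists>w \<in> W. {u, w} \<in> tedges G"
proof -
  from assms(1) consider
      (black) U' W' where "{U, W} = {U', W'}" "U' \<in> P" "W' \<in> P"
        "\<forall>u \<in> U'. \<forall>w \<in> W'. {u, w} \<in> black G"
    | (red) U' W' u w where "{U, W} = {U', W'}" "u \<in> U'" "w \<in> W'" "{u, w} \<in> tedges G"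
    unfolding tedges_def[of "quotient G P"] black_def[of "quotient G P"]
      red_def[of "quotient G P"]
    unfolding quotient_def
    by (simp only: fst_conv snd_conv) (elim UnE CollectE exE conjE bexE; iprover)
  then obtain U' W' u w where "{U, W} = {U', W'}" "u \<in> U'" "w \<in> W'" "{u, w} \<in> tedges G"
  proof cases
    case black
    from black(2,3) assms(2) obtain u w where uw: "u \<in> U'" "w \<in> W'"
      by (metis all_not_in_conv)
    with black(4) have "{u, w} \<in> tedges G" by (simp add: tedges_def)
    with black(1) uw show thesis by (rule that)
  qed
  moreover have "{w, u} \<in> tedges G" using \<open>{u, w} \<in> tedges G\<close> by (simp add: insert_commute)
  ultimately show ?thesis by (auto simp: doubleton_eq_iff)
qed

lemma tverts_orbit_quotient: "tverts (orbit_quotient G \<Gamma>) = orbit \<Gamma> ` tverts G"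
  by (simp add: orbit_quotient_def quotient_def tverts_def)

lemma Aut_tedges_iff:
  "f \<in> Aut G \<Longrightarrow> u \<in> tverts G \<Longrightarrow> w \<in> tverts G \<Longrightarrow>
    {f u, f w} \<in> tedges G \<longleftrightarrow> {u, w} \<in> tedges G"
  by (simp add: Aut_def)

lemma tneighbours_orbit_quotient_subset:
  assumes sg: "subgroup \<Gamma> (BijGroup (tverts G))" and aut: "\<Gamma> \<subseteq> Aut G"
    and v: "v \<in> tverts G"
  shows "tneighbours (orbit_quotient G \<Gamma>) (orbit \<Gamma> v) \<subseteq> orbit \<Gamma> ` tneighbours G v"
proof
  fix W assume "W \<in> tneighbours (orbit_quotient G \<Gamma>) (orbit \<Gamma> v)"
  then have "W \<in> orbit \<Gamma> ` tverts G"
    and "{orbit \<Gamma> v, W} \<in> tedges (quotient G (orbit \<Gamma> ` tverts G))"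
    unfolding tneighbours_def tverts_orbit_quotient by (auto simp: orbit_quotient_def)
  then obtain x where x: "x \<in> tverts G" "W = orbit \<Gamma> x"
    and "{orbit \<Gamma> v, W} \<in> tedges (quotient G (orbit \<Gamma> ` tverts G))"
    by blast
  moreover have "{} \<notin> orbit \<Gamma> ` tverts G" using orbit_self[OF sg] by blast
  ultimately obtain u w where "u \<in> orbit \<Gamma> v" "w \<in> W" and uw: "{u, w} \<in> tedges G"
    using tedges_quotient_witness by blast
  then obtain f g where f: "f \<in> \<Gamma>" "u = f v" and g: "g \<in> \<Gamma>" "w = g x"
    using x(2) unfolding orbit_def by blast
  define h where "h = inv\<^bsub>BijGroup (tverts G)\<^esub> f"
  have h: "h \<in> \<Gamma>" unfolding h_def using subgroup.m_inv_closed[OF sg f(1)] .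
  have u: "u \<in> tverts G" and w: "w \<in> tverts G"
    using f g v x(1) subgroup_BijGroup_apply_mem[OF sg] by auto
  have "h u = v" unfolding h_def f(2) using subgroup_BijGroup_inv_apply[OF sg f(1) v] .
  with uw have "{v, h w} \<in> tedges G"
    using Aut_tedges_iff[of h G u w] h aut u w by auto
  moreover have "h w \<in> tverts G" using subgroup_BijGroup_apply_mem[OF sg h w] .
  moreover have "orbit \<Gamma> (h w) = W"
    using orbit_apply[OF sg h w] orbit_apply[OF sg g(1) x(1)] g(2) x(2) by simp
  ultimately show "W \<in> orbit \<Gamma> ` tneighbours G v"
    unfolding tneighbours_def by blast
qed

lemma tdeg_orbit_quotient_le:
  assumes "trigraph G" "subgroup \<Gamma> (BijGroup (tverts G))" "\<Gamma> \<subseteq> Aut G" "v \<in> tverts G"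
  shows "tdeg (orbit_quotient G \<Gamma>) (orbit \<Gamma> v) \<le> tdeg G v"
proof -
  have fin: "finite (tneighbours G v)"
    using assms(1) by (simp add: trigraph_def tneighbours_def)
  have "tdeg (orbit_quotient G \<Gamma>) (orbit \<Gamma> v) \<le> card (orbit \<Gamma> ` tneighbours G v)"
    unfolding tdeg_eq_card_tneighbours
    using tneighbours_orbit_quotient_subset[OF assms(2-4)] fin by (intro card_mono) auto
  also have "\<dots> \<le> tdeg G v"
    unfolding tdeg_eq_card_tneighbours using fin by (rule card_image_le)
  finally show ?thesis .
qed

theorem mainTheorem13:
  fixes G :: "'a trigraph" and \<Gamma> :: "('a \<Rightarrow> 'a) set"
  assumes "trigraph G"
    and "subgroup \<Gamma> (BijGroup (tverts G))"
    and "\<Gamma> \<subseteq> Aut G"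
  shows "(\<forall>v \<in> tverts G. tdeg (orbit_quotient G \<Gamma>) (orbit \<Gamma> v) \<le> tdeg G v)
         \<and> maxdeg (orbit_quotient G \<Gamma>) \<le> maxdeg G"
proof
  show deg: "\<forall>v \<in> tverts G. tdeg (orbit_quotient G \<Gamma>) (orbit \<Gamma> v) \<le> tdeg G v"
    using tdeg_orbit_quotient_le[OF assms] by blast
  show "maxdeg (orbit_quotient G \<Gamma>) \<le> maxdeg G"
  proof (rule maxdeg_mono)
    show "finite (tverts G)" using assms(1) by (simp add: trigraph_def)
  qed (use deg in \<open>auto simp: tverts_orbit_quotient\<close>)
qed

end
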